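(* Let $\mathcal C$ be the class of structures $\mathbb X=\langle X,\rho\rangle$ with $|X|=\omega$ and $\rho$ an equivalence relation on $X$ such that (C1) infinitely many $\rho$-classes are singletons, and (C2) for each $n\in\omega$ there is a $\rho$-class of size $\ge n$. Let $\mathcal C_{\mathrm{fin}}$ be the set of $\mathbb X\in\mathcal C$ all of whose classes are finite, and $\mathcal C_\omega=\mathcal C\setminus\mathcal C_{\mathrm{fin}}$. Then for all $\mathbb X,\mathbb Y\in\mathcal C$: (a) $\mathbb X\equiv_{\mathcal P}\mathbb Y$; (b) $\mathbb X\preccurlyeq_c\mathbb Y$ iff $\mathbb X\in\mathcal C_{\mathrm{fin}}$ or $\mathbb Y\in\mathcal C_\omega$; (c) $\mathbb X\sim_c\mathbb Y$ iff either both $\mathbb X,\mathbb Y\in\mathcal C_{\mathrm{fin}}$ or both $\mathbb X,\mathbb Y\in\mathcal C_\omega$.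
   Context: The language has one binary relation symbol $R$. A condensation from $\langle X,\rho\rangle$ onto $\langle Y,\sigma\rangle$ is a bijection $F:X\to Y$ with $x\,\rho\,x'\Rightarrow F(x)\,\sigma\,F(x')$; $\mathbb X\preccurlyeq_c\mathbb Y$ means a condensation exists, and $\mathbb X\sim_c\mathbb Y$ means $\mathbb X\preccurlyeq_c\mathbb Y$ and $\mathbb Y\preccurlyeq_c\mathbb X$. $\mathcal P_0$ consists of all atomic formulas ($v_\alpha=v_\beta$, $R(v_\alpha,v_\beta)$) and all $\neg\,v_\alpha=v_\beta$; $\mathcal P$ is the closure of $\mathcal P_0$ under finite conjunctions, finite disjunctions, $\forall v$ and $\exists v$ (no negation). $\mathbb X\equiv_{\mathcal P}\mathbb Y$ means $\mathbb X$ and $\mathbb Y$ satisfy the same sentences of $\mathcal P$. *)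

theory Defs
  imports Main "HOL-Library.Countable_Set"
begin

text \<open>Formulas of the positive fragment P: built from v_i = v_j, R(v_i,v_j), not v_i = v_j
  by binary conjunction, binary disjunction, forall and exists.\<close>
datatype pform =
    PEq nat nat
  | PRel nat nat
  | PNeq nat nat
  | PConj pform pform
  | PDisj pform pform
  | PAll nat pform
  | PEx nat pform

fun fvars :: "pform \<Rightarrow> nat set" where
  "fvars (PEq i j) = {i, j}"
| "fvars (PRel i j) = {i, j}"
| "fvars (PNeq i j) = {i, j}"
| "fvars (PConj p q) = fvars p \<union> fvars q"
| "fvars (PDisj p q) = fvars p \<union> fvars q"
| "fvars (PAll i p) = fvars p - {i}"
| "fvars (PEx i p) = fvars p - {i}"

definition psentence :: "pform \<Rightarrow> bool" where
  "psentence p \<longleftrightarrow> fvars p = {}"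

fun psat :: "'a set \<Rightarrow> ('a \<times> 'a) set \<Rightarrow> (nat \<Rightarrow> 'a) \<Rightarrow> pform \<Rightarrow> bool" where
  "psat X r v (PEq i j) \<longleftrightarrow> v i = v j"
| "psat X r v (PRel i j) \<longleftrightarrow> (v i, v j) \<in> r"
| "psat X r v (PNeq i j) \<longleftrightarrow> v i \<noteq> v j"
| "psat X r v (PConj p q) \<longleftrightarrow> psat X r v p \<and> psat X r v q"
| "psat X r v (PDisj p q) \<longleftrightarrow> psat X r v p \<or> psat X r v q"
| "psat X r v (PAll i p) \<longleftrightarrow> (\<forall>a\<in>X. psat X r (v(i := a)) p)"
| "psat X r v (PEx i p) \<longleftrightarrow> (\<exists>a\<in>X. psat X r (v(i := a)) p)"

text \<open>Truth of a formula in a structure: satisfied under every assignment into the carrier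
  (for sentences in a nonempty structure this is independent of the assignment).\<close>
definition pmodels :: "'a set \<Rightarrow> ('a \<times> 'a) set \<Rightarrow> pform \<Rightarrow> bool" where
  "pmodels X r p \<longleftrightarrow> (\<forall>v. (\<forall>n. v n \<in> X) \<longrightarrow> psat X r v p)"

definition P_equiv :: "'a set \<Rightarrow> ('a \<times> 'a) set \<Rightarrow> 'b set \<Rightarrow> ('b \<times> 'b) set \<Rightarrow> bool" where
  "P_equiv X r Y s \<longleftrightarrow> (\<forall>p. psentence p \<longrightarrow> (pmodels X r p \<longleftrightarrow> pmodels Y s p))"

definition condensation :: "('a \<Rightarrow> 'b) \<Rightarrow> 'a set \<Rightarrow> ('a \<times> 'a) set \<Rightarrow> 'b set \<Rightarrow> ('b \<times> 'b) set \<Rightarrow> bool" where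
  "condensation F X r Y s \<longleftrightarrow> bij_betw F X Y \<and>
     (\<forall>x\<in>X. \<forall>x'\<in>X. (x, x') \<in> r \<longrightarrow> (F x, F x') \<in> s)"

definition condenses :: "'a set \<Rightarrow> ('a \<times> 'a) set \<Rightarrow> 'b set \<Rightarrow> ('b \<times> 'b) set \<Rightarrow> bool" where
  "condenses X r Y s \<longleftrightarrow> (\<exists>F. condensation F X r Y s)"

definition bi_condensable :: "'a set \<Rightarrow> ('a \<times> 'a) set \<Rightarrow> 'b set \<Rightarrow> ('b \<times> 'b) set \<Rightarrow> bool" where
  "bi_condensable X r Y s \<longleftrightarrow> condenses X r Y s \<and> condenses Y s X r"

definition in_C :: "'a set \<Rightarrow> ('a \<times> 'a) set \<Rightarrow> bool" where
  "in_C X r \<longleftrightarrow> countable X \<and> infinite X \<and> equiv X r \<and>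
     infinite {c \<in> X // r. card c = 1} \<and>
     (\<forall>n::nat. \<exists>c \<in> X // r. infinite c \<or> n \<le> card c)"

definition in_C_fin :: "'a set \<Rightarrow> ('a \<times> 'a) set \<Rightarrow> bool" where
  "in_C_fin X r \<longleftrightarrow> in_C X r \<and> (\<forall>c \<in> X // r. finite c)"

definition in_C_omega :: "'a set \<Rightarrow> ('a \<times> 'a) set \<Rightarrow> bool" where
  "in_C_omega X r \<longleftrightarrow> in_C X r \<and> \<not> in_C_fin X r"

end

theory Submission
  imports Defs
begin

text \<open>Positive sentences are preserved by condensations, and a condensation maps an infinite
  class injectively into a single class, so no member of C_omega condenses onto a member of
  C_fin. Conversely, since the infinitely many singletons may be sent anywhere, every member of C
  condenses onto any structure with an infinite class (send the other points injectively into
  that class), and a member of C_fin condenses onto another one by embedding its classes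
  injectively into larger classes. This gives (b) and (c), and (a) except for a sentence true in
  some Y in C_omega that might fail in some X in C_fin. Such a sentence also holds in X with one
  extra infinite class added, because Y condenses onto that structure. As X has infinitely many
  classes of every size at least s, an Ehrenfeucht-Fraisse game shows that adding this class is
  invisible to every formula.\<close>

section \<open>Positive formulas and condensations\<close>

lemma psat_cong:
  "(\<And>n. n \<in> fvars p \<Longrightarrow> v n = v' n) \<Longrightarrow> psat X r v p \<longleftrightarrow> psat X r v' p"
proof (induction p arbitrary: v v')
  case (PAll i p)
  have "psat X r (v(i := a)) p \<longleftrightarrow> psat X r (v'(i := a)) p" for a
    by (rule PAll.IH) (use PAll.prems in auto)
  then show ?case by simp
next
  case (PEx i p)
  have "psat X r (v(i := a)) p \<longleftrightarrow> psat X r (v'(i := a)) p" for a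
    by (rule PEx.IH) (use PEx.prems in auto)
  then show ?case by simp
next
  case (PConj p q)
  have "psat X r v p \<longleftrightarrow> psat X r v' p" by (rule PConj.IH(1)) (use PConj.prems in auto)
  moreover have "psat X r v q \<longleftrightarrow> psat X r v' q" by (rule PConj.IH(2)) (use PConj.prems in auto)
  ultimately show ?case by simp
next
  case (PDisj p q)
  have "psat X r v p \<longleftrightarrow> psat X r v' p" by (rule PDisj.IH(1)) (use PDisj.prems in auto)
  moreover have "psat X r v q \<longleftrightarrow> psat X r v' q" by (rule PDisj.IH(2)) (use PDisj.prems in auto)
  ultimately show ?case by simp
qed simp_all

lemma pmodels_iff_psat:
  fixes v :: "nat \<Rightarrow> 'a"
  assumes "psentence p" and "\<And>n. v n \<in> X"
  shows "pmodels X r p \<longleftrightarrow> psat X r v p"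
proof -
  have indep: "psat X r v' p \<longleftrightarrow> psat X r v p" for v'
    by (rule psat_cong) (use assms(1) in \<open>simp add: psentence_def\<close>)
  show ?thesis
    unfolding pmodels_def using assms(2) indep by (metis (no_types, lifting))
qed

lemma psat_condensation:
  fixes v :: "nat \<Rightarrow> 'a"
  assumes F: "condensation F X r Y s" and "\<And>n. v n \<in> X" and "psat X r v p"
  shows "psat Y s (F \<circ> v) p"
  using assms(2,3)
proof (induction p arbitrary: v)
  case (PNeq i j)
  then show ?case using F unfolding condensation_def bij_betw_def inj_on_def by auto
next
  case (PRel i j)
  then show ?case using F unfolding condensation_def by auto
next
  case (PAll i p)
  have *: "psat Y s ((F \<circ> v)(i := F a)) p" if "a \<in> X" for a
  proof -
    have "psat X r (v(i := a)) p" using PAll.prems(2) that by simp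
    then have "psat Y s (F \<circ> (v(i := a))) p"
      by (rule PAll.IH[rotated]) (use PAll.prems(1) that in simp)
    then show ?thesis by (simp only: fun_upd_comp)
  qed
  show ?case unfolding psat.simps
  proof
    fix b assume "b \<in> Y"
    then obtain a where "a \<in> X" "b = F a"
      using F unfolding condensation_def bij_betw_def by auto
    then show "psat Y s ((F \<circ> v)(i := b)) p" using * by blast
  qed
next
  case (PEx i p)
  then obtain a where a: "a \<in> X" "psat X r (v(i := a)) p" by auto
  have "psat Y s (F \<circ> (v(i := a))) p"
    by (rule PEx.IH[OF _ a(2)]) (use PEx.prems(1) a(1) in simp)
  then have "psat Y s ((F \<circ> v)(i := F a)) p" by (simp only: fun_upd_comp)
  moreover have "F a \<in> Y" using F a(1) unfolding condensation_def bij_betw_def by auto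
  ultimately show ?case unfolding psat.simps by (rule bexI)
qed auto

lemma pmodels_condenses:
  assumes "condenses X r Y s" and "pmodels X r p"
  shows "pmodels Y s p"
  unfolding pmodels_def
proof (intro allI impI)
  fix w :: "nat \<Rightarrow> 'b" assume w: "\<forall>n. w n \<in> Y"
  obtain F where F: "condensation F X r Y s" using assms(1) unfolding condenses_def by auto
  then have bij: "bij_betw F X Y" unfolding condensation_def by simp
  define v where "v = inv_into X F \<circ> w"
  have v: "v n \<in> X" for n using w bij unfolding v_def by (auto simp: bij_betw_def inv_into_into)
  have "F \<circ> v = w" using w bij unfolding v_def by (auto simp: bij_betw_def f_inv_into_f)
  moreover have "psat X r v p" using assms(2) v unfolding pmodels_def by blast
  then have "psat Y s (F \<circ> v) p" by (rule psat_condensation[OF F v])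
  ultimately show "psat Y s w p" by simp
qed

definition card_ge :: "nat \<Rightarrow> 'a set \<Rightarrow> bool" where
  "card_ge n S \<longleftrightarrow> infinite S \<or> n \<le> card S"

definition card_eq_upto :: "nat \<Rightarrow> 'a set \<Rightarrow> 'b set \<Rightarrow> bool" where
  "card_eq_upto k S T \<longleftrightarrow> (\<forall>n\<le>k. card_ge n S \<longleftrightarrow> card_ge n T)"

lemma card_ge_mono: "card_ge n S \<Longrightarrow> m \<le> n \<Longrightarrow> card_ge m S"
  by (auto simp: card_ge_def)

lemma card_ge_infinite: "infinite S \<Longrightarrow> card_ge n S"
  by (simp add: card_ge_def)

lemma card_ge_Suc_0_iff: "card_ge (Suc 0) S \<longleftrightarrow> S \<noteq> {}"
  using card_gt_0_iff[of S] by (auto simp: card_ge_def)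

lemma card_ge_Diff_singleton: "c \<in> S \<Longrightarrow> card_ge n (S - {c}) \<longleftrightarrow> card_ge (Suc n) S"
proof (cases "finite S")
  case True
  moreover assume "c \<in> S"
  ultimately have "0 < card S" using card_gt_0_iff by blast
  with True \<open>c \<in> S\<close> show ?thesis by (auto simp: card_ge_def card_Diff_singleton)
qed (simp add: card_ge_def)

lemma card_ge_image: "inj_on f S \<Longrightarrow> card_ge n (f ` S) \<longleftrightarrow> card_ge n S"
  by (simp add: card_ge_def finite_image_iff card_image)

lemma finite_card_eq_iff_card_ge: "finite S \<and> card S = n \<longleftrightarrow> card_ge n S \<and> \<not> card_ge (Suc n) S"
  by (auto simp: card_ge_def)

lemma card_eq_upto_sym: "card_eq_upto k S T \<Longrightarrow> card_eq_upto k T S"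
  by (simp add: card_eq_upto_def)

lemma card_eq_upto_mono: "card_eq_upto k S T \<Longrightarrow> m \<le> k \<Longrightarrow> card_eq_upto m S T"
  unfolding card_eq_upto_def by (meson order.trans)

lemma card_eq_upto_nonempty:
  assumes "card_eq_upto k S T" and "0 < k" and "S \<noteq> {}"
  shows "T \<noteq> {}"
proof -
  have "card_ge (Suc 0) S \<longleftrightarrow> card_ge (Suc 0) T"
    using assms(1,2) unfolding card_eq_upto_def by simp
  with assms(3) show ?thesis by (simp add: card_ge_Suc_0_iff)
qed

lemma card_eq_upto_card_ge: "card_ge k S \<Longrightarrow> card_ge k T \<Longrightarrow> card_eq_upto k S T"
  unfolding card_eq_upto_def by (meson card_ge_mono)

lemma card_eq_upto_Diff_singleton:
  assumes "card_eq_upto (Suc k) S T" and "c \<in> S \<longleftrightarrow> d \<in> T"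
  shows "card_eq_upto k (S - {c}) (T - {d})"
proof (cases "c \<in> S")
  case True
  then show ?thesis
    using assms by (simp add: card_eq_upto_def card_ge_Diff_singleton)
next
  case False
  then show ?thesis using assms card_eq_upto_mono[of "Suc k" S T k] by simp
qed

lemma card_eq_upto_finite_card:
  "finite S \<Longrightarrow> finite T \<Longrightarrow> card S = card T \<Longrightarrow> card_eq_upto k S T"
  by (simp add: card_eq_upto_def card_ge_def)

lemma card_eq_upto_finite_card_iff:
  assumes "card_eq_upto (Suc k) S T" and "s \<le> k"
  shows "finite S \<and> card S = s \<longleftrightarrow> finite T \<and> card T = s"
  using assms unfolding finite_card_eq_iff_card_ge card_eq_upto_def by simp

section \<open>An Ehrenfeucht-Fraisse game for equivalence relations\<close>

lemma mem_quotient_iff: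
  assumes "equiv A r" and "c \<in> A // r" and "a \<in> A"
  shows "a \<in> c \<longleftrightarrow> c = r``{a}"
proof -
  obtain x where x: "c = r``{x}" "x \<in> A" using assms(2) by (rule quotientE)
  have "a \<in> r``{x} \<longleftrightarrow> r``{x} = r``{a}"
    using eq_equiv_class_iff[OF assms(1) x(2) assms(3)] by simp
  then show ?thesis using x(1) by simp
qed

lemma equiv_related_cong:
  assumes "equiv A r" and "(x, a) \<in> r"
  shows "(z, a) \<in> r \<longleftrightarrow> (z, x) \<in> r"
  using assms unfolding equiv_def sym_def trans_def by blast

definition fresh_classes :: "'a set \<Rightarrow> ('a \<times> 'a) set \<Rightarrow> 'a set \<Rightarrow> ('a set \<Rightarrow> bool) \<Rightarrow> 'a set set" where
  "fresh_classes A r M Q = {c \<in> A // r. c \<inter> M = {} \<and> Q c}"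

lemma fresh_classes_insert:
  assumes "equiv A r" and "a \<in> A"
  shows "fresh_classes A r (insert a M) Q = fresh_classes A r M Q - {r``{a}}"
proof (rule set_eqI)
  fix c
  have "c \<in> A // r \<Longrightarrow> a \<in> c \<longleftrightarrow> c = r``{a}" by (rule mem_quotient_iff[OF assms(1) _ assms(2)])
  then show "c \<in> fresh_classes A r (insert a M) Q \<longleftrightarrow> c \<in> fresh_classes A r M Q - {r``{a}}"
    unfolding fresh_classes_def by blast
qed

lemma class_in_fresh_classes_iff:
  assumes "equiv A r" and "a \<in> A"
  shows "r``{a} \<in> fresh_classes A r M Q \<longleftrightarrow> r``{a} \<inter> M = {} \<and> Q (r``{a})"
  using quotientI[OF assms(2)] by (simp add: fresh_classes_def)

definition partial_iso :: "'a set \<Rightarrow> ('a \<times> 'a) set \<Rightarrow> 'b set \<Rightarrow> ('b \<times> 'b) set \<Rightarrow> ('a \<times> 'b) set \<Rightarrow> bool" where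
  "partial_iso A rA B rB P \<longleftrightarrow> P \<subseteq> A \<times> B \<and>
     (\<forall>(x, y)\<in>P. \<forall>(x', y')\<in>P. (x = x' \<longleftrightarrow> y = y') \<and> ((x, x') \<in> rA \<longleftrightarrow> (y, y') \<in> rB))"

lemma partial_isoD:
  assumes "partial_iso A rA B rB P" and "(x, y) \<in> P" and "(x', y') \<in> P"
  shows "x \<in> A" "y \<in> B" "x = x' \<longleftrightarrow> y = y'" "(x, x') \<in> rA \<longleftrightarrow> (y, y') \<in> rB"
  using assms unfolding partial_iso_def by fast+

lemma partial_iso_insert:
  assumes eA: "equiv A rA" and eB: "equiv B rB" and iso: "partial_iso A rA B rB P"
    and a: "a \<in> A" "a \<notin> fst ` P" and b: "b \<in> B" "b \<notin> snd ` P"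
    and rel: "\<And>x y. (x, y) \<in> P \<Longrightarrow> (x, a) \<in> rA \<longleftrightarrow> (y, b) \<in> rB"
  shows "partial_iso A rA B rB (insert (a, b) P)"
proof -
  have rel': "(a, x) \<in> rA \<longleftrightarrow> (b, y) \<in> rB" if "(x, y) \<in> P" for x y
    using rel[OF that] eA eB unfolding equiv_def sym_def by blast
  have refl: "(a, a) \<in> rA" "(b, b) \<in> rB"
    using a(1) b(1) eA eB unfolding equiv_def refl_on_def by blast+
  have new: "x \<noteq> a" "y \<noteq> b" if "(x, y) \<in> P" for x y
    using that a(2) b(2) by force+
  show ?thesis
    using iso a(1) b(1) refl unfolding partial_iso_def
    by (auto simp: rel rel' dest: new)
qed

text \<open>Duplicator's invariant with \<open>k\<close> rounds to go.\<close>
definition ef_invariant ::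
  "'a set \<Rightarrow> ('a \<times> 'a) set \<Rightarrow> 'b set \<Rightarrow> ('b \<times> 'b) set \<Rightarrow> nat \<Rightarrow> ('a \<times> 'b) set \<Rightarrow> bool" where
  "ef_invariant A rA B rB k P \<longleftrightarrow> partial_iso A rA B rB P \<and>
     (\<forall>(x, y)\<in>P. card_eq_upto k (rA``{x} - fst ` P) (rB``{y} - snd ` P)) \<and>
     (\<forall>s<k. card_eq_upto k (fresh_classes A rA (fst ` P) (\<lambda>c. finite c \<and> card c = s))
                           (fresh_classes B rB (snd ` P) (\<lambda>c. finite c \<and> card c = s))) \<and>
     (\<forall>s\<le>k. card_eq_upto k (fresh_classes A rA (fst ` P) (card_ge s))
                           (fresh_classes B rB (snd ` P) (card_ge s)))"

lemma ef_invariant_SucD: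
  assumes "ef_invariant A rA B rB (Suc k) P"
  shows "ef_invariant A rA B rB k P"
proof -
  have down: "card_eq_upto (Suc k) S T \<Longrightarrow> card_eq_upto k S T" for S :: "'c set" and T :: "'d set"
    by (erule card_eq_upto_mono) simp
  show ?thesis using assms unfolding ef_invariant_def by (auto intro: down)
qed

lemma ef_invariant_swap:
  assumes inv: "ef_invariant A rA B rB k P"
  shows "ef_invariant B rB A rA k (prod.swap ` P)"
proof -
  have proj: "fst ` prod.swap ` P = snd ` P" "snd ` prod.swap ` P = fst ` P"
    by (simp_all add: image_image)
  have "partial_iso B rB A rA (prod.swap ` P)"
    using inv unfolding ef_invariant_def partial_iso_def by auto
  moreover have "card_eq_upto k (rB``{y} - snd ` P) (rA``{x} - fst ` P)" if "(x, y) \<in> P" for x y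
    using inv that unfolding ef_invariant_def by (fastforce intro: card_eq_upto_sym)
  ultimately show ?thesis
    using inv unfolding ef_invariant_def proj by (auto intro: card_eq_upto_sym)
qed

lemma fresh_classes_insert_card_eq_upto:
  assumes "equiv A rA" "equiv B rB" "a \<in> A" "b \<in> B"
    and "card_eq_upto (Suc k) (fresh_classes A rA M QA) (fresh_classes B rB N QB)"
    and "rA``{a} \<in> fresh_classes A rA M QA \<longleftrightarrow> rB``{b} \<in> fresh_classes B rB N QB"
  shows "card_eq_upto k (fresh_classes A rA (insert a M) QA) (fresh_classes B rB (insert b N) QB)"
  unfolding fresh_classes_insert[OF assms(1,3)] fresh_classes_insert[OF assms(2,4)]
  using assms(5,6) by (rule card_eq_upto_Diff_singleton)

lemma class_in_fresh_classes_cong: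
  assumes eA: "equiv A rA" and eB: "equiv B rB" and "a \<in> A" "b \<in> B"
    and rest: "card_eq_upto k (rA``{a} - M) (rB``{b} - N)"
    and fresh: "rA``{a} \<inter> M = {} \<longleftrightarrow> rB``{b} \<inter> N = {}"
    and Q: "card_eq_upto k (rA``{a}) (rB``{b}) \<Longrightarrow> QA (rA``{a}) \<longleftrightarrow> QB (rB``{b})"
  shows "rA``{a} \<in> fresh_classes A rA M QA \<longleftrightarrow> rB``{b} \<in> fresh_classes B rB N QB"
proof (cases "rA``{a} \<inter> M = {}")
  case True
  then have "rA``{a} - M = rA``{a}" "rB``{b} - N = rB``{b}" using fresh by blast+
  then show ?thesis
    using True fresh Q rest class_in_fresh_classes_iff[OF eA \<open>a \<in> A\<close>]
      class_in_fresh_classes_iff[OF eB \<open>b \<in> B\<close>]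
    by simp
next
  case False
  then show ?thesis
    using fresh class_in_fresh_classes_iff[OF eA \<open>a \<in> A\<close>] class_in_fresh_classes_iff[OF eB \<open>b \<in> B\<close>]
    by simp
qed

lemma ef_invariant_insert:
  assumes eA: "equiv A rA" and eB: "equiv B rB"
    and inv: "ef_invariant A rA B rB (Suc k) P"
    and a: "a \<in> A" "a \<notin> fst ` P" and b: "b \<in> B" "b \<notin> snd ` P"
    and rel: "\<And>x y. (x, y) \<in> P \<Longrightarrow> (x, a) \<in> rA \<longleftrightarrow> (y, b) \<in> rB"
    and rest: "card_eq_upto (Suc k) (rA``{a} - fst ` P) (rB``{b} - snd ` P)"
    and fresh: "rA``{a} \<inter> fst ` P = {} \<longleftrightarrow> rB``{b} \<inter> snd ` P = {}"
  shows "ef_invariant A rA B rB k (insert (a, b) P)"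
proof -
  let ?P' = "insert (a, b) P"
  have proj: "fst ` ?P' = insert a (fst ` P)" "snd ` ?P' = insert b (snd ` P)" by simp_all
  have iso: "partial_iso A rA B rB P" and
    rest_old: "\<And>x y. (x, y) \<in> P \<Longrightarrow> card_eq_upto (Suc k) (rA``{x} - fst ` P) (rB``{y} - snd ` P)" and
    exact: "\<And>s. s \<le> k \<Longrightarrow> card_eq_upto (Suc k)
      (fresh_classes A rA (fst ` P) (\<lambda>c. finite c \<and> card c = s))
      (fresh_classes B rB (snd ` P) (\<lambda>c. finite c \<and> card c = s))" and
    large: "\<And>s. s \<le> Suc k \<Longrightarrow> card_eq_upto (Suc k)
      (fresh_classes A rA (fst ` P) (card_ge s)) (fresh_classes B rB (snd ` P) (card_ge s))"
    using inv unfolding ef_invariant_def by auto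
  have "card_eq_upto k (rA``{x} - fst ` ?P') (rB``{y} - snd ` ?P')" if "(x, y) \<in> ?P'" for x y
  proof -
    have "rA``{x} - fst ` ?P' = (rA``{x} - fst ` P) - {a}" "rB``{y} - snd ` ?P' = (rB``{y} - snd ` P) - {b}"
      by auto
    moreover have "card_eq_upto k ((rA``{x} - fst ` P) - {a}) ((rB``{y} - snd ` P) - {b})"
    proof (cases "(x, y) = (a, b)")
      case True
      have "a \<in> rA``{a}" "b \<in> rB``{b}" using equiv_class_self eA eB a(1) b(1) by fast+
      then show ?thesis using True rest a(2) b(2) by (auto intro: card_eq_upto_Diff_singleton)
    next
      case False
      then have "(x, y) \<in> P" using that by auto
      then show ?thesis
        using rest_old rel a(2) b(2) by (auto intro: card_eq_upto_Diff_singleton)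
    qed
    ultimately show ?thesis by simp
  qed
  moreover have "card_eq_upto k (fresh_classes A rA (fst ` ?P') QA) (fresh_classes B rB (snd ` ?P') QB)"
    if counts: "card_eq_upto (Suc k) (fresh_classes A rA (fst ` P) QA) (fresh_classes B rB (snd ` P) QB)"
      and Q: "card_eq_upto (Suc k) (rA``{a}) (rB``{b}) \<Longrightarrow> QA (rA``{a}) \<longleftrightarrow> QB (rB``{b})"
    for QA QB
    unfolding proj using eA eB a(1) b(1) counts
    by (rule fresh_classes_insert_card_eq_upto[OF _ _ _ _ _
        class_in_fresh_classes_cong[where QA = QA and QB = QB, OF eA eB a(1) b(1) rest fresh Q]])
  ultimately show ?thesis
    unfolding ef_invariant_def
    using partial_iso_insert[OF eA eB iso a b rel] exact large
    by (auto simp: card_eq_upto_finite_card_iff card_eq_upto_def)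
qed

lemma ef_invariant_obtain_fresh_class:
  assumes inv: "ef_invariant A rA B rB (Suc k) P"
    and c: "c \<in> A // rA" "c \<inter> fst ` P = {}"
  obtains d where "d \<in> B // rB" "d \<inter> snd ` P = {}" "card_eq_upto (Suc k) c d"
proof (cases "finite c \<and> card c \<le> k")
  case True
  let ?Q = "\<lambda>c'. finite c' \<and> card c' = card c"
  have "card_eq_upto (Suc k) (fresh_classes A rA (fst ` P) ?Q) (fresh_classes B rB (snd ` P) ?Q)"
    using inv True unfolding ef_invariant_def by auto
  moreover have "fresh_classes A rA (fst ` P) ?Q \<noteq> {}"
    using c True unfolding fresh_classes_def by blast
  ultimately have "fresh_classes B rB (snd ` P) ?Q \<noteq> {}"
    by (rule card_eq_upto_nonempty[OF _ zero_less_Suc])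
  then obtain d where "d \<in> fresh_classes B rB (snd ` P) ?Q" by blast
  then show ?thesis
    using that True by (auto simp: fresh_classes_def card_eq_upto_finite_card)
next
  case False
  then have big: "card_ge (Suc k) c" unfolding card_ge_def by auto
  have "card_eq_upto (Suc k) (fresh_classes A rA (fst ` P) (card_ge (Suc k)))
      (fresh_classes B rB (snd ` P) (card_ge (Suc k)))"
    using inv unfolding ef_invariant_def by auto
  moreover have "fresh_classes A rA (fst ` P) (card_ge (Suc k)) \<noteq> {}"
    using c big unfolding fresh_classes_def by blast
  ultimately have "fresh_classes B rB (snd ` P) (card_ge (Suc k)) \<noteq> {}"
    by (rule card_eq_upto_nonempty[OF _ zero_less_Suc])
  then obtain d where "d \<in> fresh_classes B rB (snd ` P) (card_ge (Suc k))" by blast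
  then show ?thesis
    using that big by (auto simp: fresh_classes_def card_eq_upto_card_ge)
qed

lemma ef_invariant_extend_related:
  assumes eA: "equiv A rA" and eB: "equiv B rB" and inv: "ef_invariant A rA B rB (Suc k) P"
    and a: "a \<in> A" "a \<notin> fst ` P" and xy: "(x, y) \<in> P" and xa: "(x, a) \<in> rA"
  shows "\<exists>b\<in>B. ef_invariant A rA B rB k (insert (a, b) P)"
proof -
  have iso: "partial_iso A rA B rB P" using inv unfolding ef_invariant_def by simp
  have rest: "card_eq_upto (Suc k) (rA``{x} - fst ` P) (rB``{y} - snd ` P)"
    using inv xy unfolding ef_invariant_def by auto
  moreover have "rA``{x} - fst ` P \<noteq> {}" using xa a(2) by auto
  ultimately have "rB``{y} - snd ` P \<noteq> {}" by (rule card_eq_upto_nonempty[OF _ zero_less_Suc])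
  then obtain b where yb: "(y, b) \<in> rB" and b: "b \<notin> snd ` P" by blast
  have "b \<in> B" using equiv_type[OF eB] yb by blast
  moreover have "ef_invariant A rA B rB k (insert (a, b) P)"
  proof (rule ef_invariant_insert[OF eA eB inv a \<open>b \<in> B\<close> b])
    fix x' y' assume "(x', y') \<in> P"
    then have "(x', x) \<in> rA \<longleftrightarrow> (y', y) \<in> rB" using partial_isoD(4)[OF iso _ xy] by blast
    then show "(x', a) \<in> rA \<longleftrightarrow> (y', b) \<in> rB"
      using equiv_related_cong[OF eA xa] equiv_related_cong[OF eB yb] by simp
  next
    have classes: "rA``{a} = rA``{x}" "rB``{b} = rB``{y}"
      using equiv_class_eq[OF eA xa] equiv_class_eq[OF eB yb] by simp_all
    then show "card_eq_upto (Suc k) (rA``{a} - fst ` P) (rB``{b} - snd ` P)" using rest by simp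
    have "x \<in> rA``{x}" "y \<in> rB``{y}"
      using partial_isoD(1,2)[OF iso xy xy] eA eB equiv_class_self by fast+
    moreover have "x \<in> fst ` P" "y \<in> snd ` P" using xy by force+
    ultimately show "rA``{a} \<inter> fst ` P = {} \<longleftrightarrow> rB``{b} \<inter> snd ` P = {}"
      unfolding classes by blast
  qed
  ultimately show ?thesis by blast
qed

lemma ef_invariant_extend_fresh:
  assumes eA: "equiv A rA" and eB: "equiv B rB" and inv: "ef_invariant A rA B rB (Suc k) P"
    and a: "a \<in> A" and fresh: "rA``{a} \<inter> fst ` P = {}"
  shows "\<exists>b\<in>B. ef_invariant A rA B rB k (insert (a, b) P)"
proof -
  obtain d where dQ: "d \<in> B // rB" and d_fresh: "d \<inter> snd ` P = {}"
    and cd: "card_eq_upto (Suc k) (rA``{a}) d"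
    using ef_invariant_obtain_fresh_class[OF inv quotientI[OF a] fresh] .
  obtain b where b: "b \<in> B" "d = rB``{b}" using dQ by (rule quotientE) simp
  have "a \<in> rA``{a}" "b \<in> rB``{b}" using equiv_class_self eA eB a b(1) by fast+
  then have "a \<notin> fst ` P" "b \<notin> snd ` P" using fresh d_fresh b(2) by blast+
  then have "ef_invariant A rA B rB k (insert (a, b) P)"
  proof (intro ef_invariant_insert[OF eA eB inv a(1) _ b(1)])
    fix x' y' assume "(x', y') \<in> P"
    then have "x' \<notin> rA``{a}" "y' \<notin> rB``{b}" using fresh d_fresh b(2) by force+
    then show "(x', a) \<in> rA \<longleftrightarrow> (y', b) \<in> rB"
      using eA eB unfolding equiv_def sym_def by blast
  next
    show "card_eq_upto (Suc k) (rA``{a} - fst ` P) (rB``{b} - snd ` P)"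
      using cd fresh d_fresh unfolding b(2) by (simp add: Diff_triv)
    show "rA``{a} \<inter> fst ` P = {} \<longleftrightarrow> rB``{b} \<inter> snd ` P = {}"
      using fresh d_fresh b(2) by simp
  qed
  then show ?thesis using b(1) by blast
qed

lemma ef_invariant_extend:
  assumes eA: "equiv A rA" and eB: "equiv B rB"
    and inv: "ef_invariant A rA B rB (Suc k) P" and a: "a \<in> A"
  shows "\<exists>b\<in>B. ef_invariant A rA B rB k (insert (a, b) P)"
proof -
  consider (matched) b where "(a, b) \<in> P"
    | (related) x y where "(x, y) \<in> P" "(x, a) \<in> rA" "a \<notin> fst ` P"
    | (fresh) "rA``{a} \<inter> fst ` P = {}"
  proof (cases "a \<in> fst ` P")
    case True
    then obtain b where "(a, b) \<in> P" by force
    then show ?thesis by (rule that(1))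
  next
    case new: False
    show ?thesis
    proof (cases "rA``{a} \<inter> fst ` P = {}")
      case False
      then obtain x where ax: "(a, x) \<in> rA" and "x \<in> fst ` P" by blast
      then obtain y where "(x, y) \<in> P" by force
      moreover have "(x, a) \<in> rA" using ax eA unfolding equiv_def sym_def by blast
      ultimately show ?thesis using new by (rule that(2))
    qed (rule that(3))
  qed
  then show ?thesis
  proof cases
    case matched
    have "partial_iso A rA B rB P" using inv unfolding ef_invariant_def by simp
    then have "b \<in> B" by (rule partial_isoD(2)[OF _ matched matched])
    moreover have "insert (a, b) P = P" using matched by (rule insert_absorb)
    ultimately show ?thesis using ef_invariant_SucD[OF inv] by (intro bexI[of _ b]) simp_all
  next
    case related
    then show ?thesis by (intro ef_invariant_extend_related[OF eA eB inv a])
  next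
    case fresh
    then show ?thesis by (rule ef_invariant_extend_fresh[OF eA eB inv a])
  qed
qed

lemma ef_invariant_extend_back:
  assumes "equiv A rA" and "equiv B rB"
    and "ef_invariant A rA B rB (Suc k) P" and "b \<in> B"
  shows "\<exists>a\<in>A. ef_invariant A rA B rB k (insert (a, b) P)"
proof -
  obtain a where "a \<in> A" and "ef_invariant B rB A rA k (insert (b, a) (prod.swap ` P))"
    using ef_invariant_extend[OF assms(2,1) ef_invariant_swap[OF assms(3)] assms(4)] by blast
  moreover have "prod.swap ` insert (b, a) (prod.swap ` P) = insert (a, b) P"
    by (simp add: image_image)
  ultimately show ?thesis using ef_invariant_swap by metis
qed

lemma ef_invariant_quantifiers:
  assumes "equiv A rA" and "equiv B rB" and inv: "ef_invariant A rA B rB (Suc k) P"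
    and step: "\<And>a b. a \<in> A \<Longrightarrow> b \<in> B \<Longrightarrow> ef_invariant A rA B rB k (insert (a, b) P) \<Longrightarrow>
      \<phi> a \<longleftrightarrow> \<psi> b"
  shows "(\<exists>a\<in>A. \<phi> a) \<longleftrightarrow> (\<exists>b\<in>B. \<psi> b)" and "(\<forall>a\<in>A. \<phi> a) \<longleftrightarrow> (\<forall>b\<in>B. \<psi> b)"
  using ef_invariant_extend[OF assms(1-3)] ef_invariant_extend_back[OF assms(1-3)] step
  by meson+

fun qdepth :: "pform \<Rightarrow> nat" where
  "qdepth (PEq i j) = 0"
| "qdepth (PRel i j) = 0"
| "qdepth (PNeq i j) = 0"
| "qdepth (PConj p q) = max (qdepth p) (qdepth q)"
| "qdepth (PDisj p q) = max (qdepth p) (qdepth q)"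
| "qdepth (PAll i p) = Suc (qdepth p)"
| "qdepth (PEx i p) = Suc (qdepth p)"

lemma psat_iff_if_ef_invariant:
  fixes v :: "nat \<Rightarrow> 'a" and w :: "nat \<Rightarrow> 'b"
  assumes eA: "equiv A rA" and eB: "equiv B rB"
  shows "ef_invariant A rA B rB k P \<Longrightarrow> qdepth p \<le> k \<Longrightarrow> (\<And>n. n \<in> fvars p \<Longrightarrow> (v n, w n) \<in> P) \<Longrightarrow>
    psat A rA v p \<longleftrightarrow> psat B rB w p"
proof (induction p arbitrary: k P v w)
  case (PEq i j)
  then have "(v i, w i) \<in> P" "(v j, w j) \<in> P" "partial_iso A rA B rB P"
    unfolding ef_invariant_def by simp_all
  then show ?case using partial_isoD(3) by simp
next
  case (PRel i j)
  then have "(v i, w i) \<in> P" "(v j, w j) \<in> P" "partial_iso A rA B rB P"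
    unfolding ef_invariant_def by simp_all
  then show ?case using partial_isoD(4) by simp
next
  case (PNeq i j)
  then have "(v i, w i) \<in> P" "(v j, w j) \<in> P" "partial_iso A rA B rB P"
    unfolding ef_invariant_def by simp_all
  then show ?case using partial_isoD(3) by simp
next
  case (PConj p q)
  have "psat A rA v p \<longleftrightarrow> psat B rB w p"
    by (rule PConj.IH(1)[OF PConj.prems(1)]) (use PConj.prems(2,3) in auto)
  moreover have "psat A rA v q \<longleftrightarrow> psat B rB w q"
    by (rule PConj.IH(2)[OF PConj.prems(1)]) (use PConj.prems(2,3) in auto)
  ultimately show ?case by simp
next
  case (PDisj p q)
  have "psat A rA v p \<longleftrightarrow> psat B rB w p"
    by (rule PDisj.IH(1)[OF PDisj.prems(1)]) (use PDisj.prems(2,3) in auto)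
  moreover have "psat A rA v q \<longleftrightarrow> psat B rB w q"
    by (rule PDisj.IH(2)[OF PDisj.prems(1)]) (use PDisj.prems(2,3) in auto)
  ultimately show ?case by simp
next
  case (PAll i q)
  then obtain k' where k: "k = Suc k'" "qdepth q \<le> k'" by (cases k) auto
  have "psat A rA (v(i := a)) q \<longleftrightarrow> psat B rB (w(i := b)) q"
    if "a \<in> A" "b \<in> B" "ef_invariant A rA B rB k' (insert (a, b) P)" for a b
    by (rule PAll.IH[OF that(3) k(2)]) (use PAll.prems(3) in auto)
  then show ?case
    unfolding psat.simps by (rule ef_invariant_quantifiers(2)[OF eA eB PAll.prems(1)[unfolded k(1)]])
next
  case (PEx i q)
  then obtain k' where k: "k = Suc k'" "qdepth q \<le> k'" by (cases k) auto
  have "psat A rA (v(i := a)) q \<longleftrightarrow> psat B rB (w(i := b)) q"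
    if "a \<in> A" "b \<in> B" "ef_invariant A rA B rB k' (insert (a, b) P)" for a b
    by (rule PEx.IH[OF that(3) k(2)]) (use PEx.prems(3) in auto)
  then show ?case
    unfolding psat.simps by (rule ef_invariant_quantifiers(1)[OF eA eB PEx.prems(1)[unfolded k(1)]])
qed

lemma P_equiv_if_ef_invariant:
  assumes "equiv A rA" and "equiv B rB" and "A \<noteq> {}" and "B \<noteq> {}"
    and "\<And>k. ef_invariant A rA B rB k {}"
  shows "P_equiv A rA B rB"
  unfolding P_equiv_def
proof (intro allI impI)
  fix p assume p: "psentence p"
  obtain a b where a: "a \<in> A" and b: "b \<in> B" using assms(3,4) by blast
  have "pmodels A rA p \<longleftrightarrow> psat A rA (\<lambda>_. a) p" by (rule pmodels_iff_psat[OF p]) (rule a)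
  moreover have "pmodels B rB p \<longleftrightarrow> psat B rB (\<lambda>_. b) p" by (rule pmodels_iff_psat[OF p]) (rule b)
  moreover have "psat A rA (\<lambda>_. a) p \<longleftrightarrow> psat B rB (\<lambda>_. b) p"
    by (rule psat_iff_if_ef_invariant[OF assms(1,2) assms(5) order.refl])
      (use p in \<open>simp add: psentence_def\<close>)
  ultimately show "pmodels A rA p \<longleftrightarrow> pmodels B rB p" by simp
qed

section \<open>Adding an infinite class\<close>

definition add_infinite_class :: "('a \<times> 'a) set \<Rightarrow> (('a + nat) \<times> ('a + nat)) set" where
  "add_infinite_class r = map_prod Inl Inl ` r \<union> range Inr \<times> range Inr"

lemma add_infinite_class_Image:
  "add_infinite_class r `` {Inl a} = Inl ` (r``{a})"
  "add_infinite_class r `` {Inr i} = range Inr"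
  by (auto simp: add_infinite_class_def)

lemma equiv_add_infinite_class:
  assumes "equiv X r"
  shows "equiv (X <+> UNIV) (add_infinite_class r)"
  using assms unfolding equiv_def refl_on_def sym_def trans_def add_infinite_class_def
  by fast

lemma quotient_add_infinite_class:
  "(X <+> UNIV) // add_infinite_class r = insert (range Inr) (image Inl ` (X // r))"
proof -
  have "(X <+> UNIV) // add_infinite_class r = (\<lambda>z. add_infinite_class r `` {z}) ` (Inl ` X \<union> range Inr)"
    by (auto simp: quotient_def Plus_def)
  also have "\<dots> = insert (range Inr) ((\<lambda>a. Inl ` (r``{a})) ` X)"
    by (auto simp: image_Un image_image add_infinite_class_Image)
  also have "\<dots> = insert (range Inr) (image Inl ` (X // r))"
    by (auto simp: quotient_def)
  finally show ?thesis .
qed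

lemma infinite_range_Inr: "infinite (range (Inr :: nat \<Rightarrow> 'a + nat))"
  by (rule range_inj_infinite) (simp add: inj_def)

lemma inj_on_image_Inl: "inj_on (image Inl) S"
  by (simp add: inj_on_def inj_image_eq_iff)

lemma fresh_classes_add_infinite_class:
  "fresh_classes (X <+> UNIV) (add_infinite_class r) {} Q =
    {c. c = range Inr \<and> Q c} \<union> image Inl ` fresh_classes X r {} (\<lambda>c. Q (Inl ` c))"
  unfolding fresh_classes_def quotient_add_infinite_class by auto

lemma infinite_fresh_classes_card_ge:
  assumes "in_C_fin X r"
  shows "infinite (fresh_classes X r {} (card_ge s))"
proof
  assume fin: "finite (fresh_classes X r {} (card_ge s))"
  define m where "m = Max (insert s (card ` fresh_classes X r {} (card_ge s)))"
  obtain c where c: "c \<in> X // r" "infinite c \<or> Suc m \<le> card c"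
    using assms unfolding in_C_fin_def in_C_def by blast
  then have "finite c" "Suc m \<le> card c" using assms unfolding in_C_fin_def by auto
  moreover have "s \<le> m" unfolding m_def using fin by simp
  ultimately have "c \<in> fresh_classes X r {} (card_ge s)"
    using c(1) unfolding fresh_classes_def card_ge_def by simp
  then have "card c \<le> m" unfolding m_def using fin by simp
  with \<open>Suc m \<le> card c\<close> show False by simp
qed

lemma ef_invariant_add_infinite_class:
  assumes "in_C_fin X r"
  shows "ef_invariant (X <+> UNIV) (add_infinite_class r) X r k {}"
proof -
  have exact: "fresh_classes (X <+> UNIV) (add_infinite_class r) {} (\<lambda>c. finite c \<and> card c = s) =
      image Inl ` fresh_classes X r {} (\<lambda>c. finite c \<and> card c = s)" for s
    unfolding fresh_classes_add_infinite_class
    using infinite_range_Inr by (auto simp: finite_image_iff card_image)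
  have large: "infinite (fresh_classes (X <+> UNIV) (add_infinite_class r) {} (card_ge s))" for s
  proof -
    have "infinite (image Inl ` fresh_classes X r {} (\<lambda>c. card_ge s (Inl ` c)))"
      using infinite_fresh_classes_card_ge[OF assms] by (simp add: finite_image_iff inj_on_image_Inl card_ge_image)
    then show ?thesis unfolding fresh_classes_add_infinite_class by simp
  qed
  show ?thesis
    unfolding ef_invariant_def partial_iso_def card_eq_upto_def image_empty
    using exact large infinite_fresh_classes_card_ge[OF assms]
    by (simp add: card_ge_image inj_on_image_Inl card_ge_infinite)
qed

section \<open>Condensations within the class C\<close>

definition singleton_elements :: "'a set \<Rightarrow> ('a \<times> 'a) set \<Rightarrow> 'a set" where
  "singleton_elements X r = {x \<in> X. r``{x} = {x}}"

lemma infinite_singleton_elements: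
  assumes "in_C X r"
  shows "infinite (singleton_elements X r)"
proof
  assume fin: "finite (singleton_elements X r)"
  have e: "equiv X r" using assms unfolding in_C_def by simp
  have "{c \<in> X // r. card c = 1} \<subseteq> (\<lambda>x. {x}) ` singleton_elements X r"
  proof
    fix c assume "c \<in> {c \<in> X // r. card c = 1}"
    then obtain x where c: "c \<in> X // r" "c = {x}" by (auto simp: card_1_singleton_iff)
    then have "x \<in> X" using in_quotient_imp_subset[OF e] by blast
    then have "x \<in> singleton_elements X r"
      using c mem_quotient_iff[OF e c(1)] unfolding singleton_elements_def by auto
    then show "c \<in> (\<lambda>x. {x}) ` singleton_elements X r" using c(2) by simp
  qed
  then have "finite {c \<in> X // r. card c = 1}" using fin finite_subset by blast
  then show False using assms unfolding in_C_def by simp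
qed

text \<open>Singletons impose no constraint, so they can be matched bijectively with the unused
  target points.\<close>
lemma condenses_by_extension:
  assumes eX: "equiv X r" and eY: "equiv Y s" and cX: "countable X" and cY: "countable Y"
    and sX: "infinite (singleton_elements X r)"
    and G: "inj_on G (X - singleton_elements X r)" "G ` (X - singleton_elements X r) \<subseteq> Y"
    and Gs: "\<And>x x'. x \<in> X - singleton_elements X r \<Longrightarrow> x' \<in> X - singleton_elements X r \<Longrightarrow>
      (x, x') \<in> r \<Longrightarrow> (G x, G x') \<in> s"
    and unused: "infinite (Y - G ` (X - singleton_elements X r))"
  shows "condenses X r Y s"
proof -
  define S where "S = singleton_elements X r"
  define T where "T = Y - G ` (X - S)"
  have "countable S" using cX unfolding S_def singleton_elements_def by (rule countable_subset[rotated]) auto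
  moreover have "countable T" using cY unfolding T_def by (rule countable_subset[rotated]) auto
  ultimately obtain H where H: "bij_betw H S T"
    using sX unused unfolding S_def T_def by (meson bij_betw_inv countableE_infinite bij_betw_trans)
  define F where "F x = (if x \<in> S then H x else G x)" for x
  have "bij_betw F S T" using H by (rule bij_betw_cong[THEN iffD1, rotated]) (simp add: F_def)
  moreover have "bij_betw G (X - S) (G ` (X - S))"
    using G(1) unfolding S_def by (rule inj_on_imp_bij_betw)
  then have "bij_betw F (X - S) (G ` (X - S))"
    by (rule bij_betw_cong[THEN iffD1, rotated]) (simp add: F_def)
  ultimately have "bij_betw F (S \<union> (X - S)) (T \<union> G ` (X - S))"
    by (rule bij_betw_combine) (auto simp: T_def)
  moreover have "S \<union> (X - S) = X" "T \<union> G ` (X - S) = Y"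
    using G(2) unfolding S_def T_def singleton_elements_def by auto
  ultimately have bij: "bij_betw F X Y" by simp
  have "(F x, F x') \<in> s" if x: "x \<in> X" "x' \<in> X" "(x, x') \<in> r" for x x'
  proof (cases "x \<in> S \<or> x' \<in> S")
    case True
    then have "x = x'"
      using x eX unfolding S_def singleton_elements_def equiv_def sym_def by auto
    moreover have "F x \<in> Y" using bij x(1) by (meson bij_betwE)
    ultimately show ?thesis using eY unfolding equiv_def refl_on_def by simp
  next
    case False
    then show ?thesis using x Gs unfolding F_def S_def by simp
  qed
  with bij show ?thesis unfolding condenses_def condensation_def by blast
qed

lemma condenses_into_clique:
  assumes eX: "equiv X r" and cX: "countable X" and sX: "infinite (singleton_elements X r)"
    and eY: "equiv Y s" and cY: "countable Y"
    and D: "D \<subseteq> Y" "infinite D" "D \<times> D \<subseteq> s" and unused: "infinite (Y - D)"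
  shows "condenses X r Y s"
proof -
  let ?N = "X - singleton_elements X r"
  have "countable ?N" using cX by (rule countable_subset[rotated]) auto
  then obtain f :: "'a \<Rightarrow> nat" where f: "inj_on f ?N" by (rule countableE)
  have "countable D" using cY D(1) by (rule countable_subset[rotated])
  then obtain e :: "'b \<Rightarrow> nat" where e: "bij_betw e D UNIV" using D(2) by (rule countableE_infinite)
  have e': "bij_betw (inv_into D e) UNIV D" using e by (rule bij_betw_inv_into)
  define G where "G = inv_into D e \<circ> f"
  have GD: "G ` ?N \<subseteq> D" unfolding G_def using e' by (auto simp: bij_betw_def)
  show ?thesis
  proof (rule condenses_by_extension[OF eX eY cX cY sX])
    show "inj_on G ?N" unfolding G_def
      by (rule comp_inj_on[OF f]) (use e' in \<open>auto simp: bij_betw_def intro: inj_on_subset\<close>)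
    show "G ` ?N \<subseteq> Y" using GD D(1) by blast
    show "(G x, G x') \<in> s" if "x \<in> ?N" "x' \<in> ?N" for x x' using that GD D(3) by blast
    show "infinite (Y - G ` ?N)" using unused GD by (meson Diff_mono finite_subset order_refl)
  qed
qed

text \<open>Distinct elements get targets with distinct \<open>f\<close>-values: the \<open>n\<close>-th attained value of
  \<open>f\<close> is reserved for the element coded \<open>n = prod_encode (index c, g c)\<close>, and \<open>g c \<le> n\<close>.\<close>
lemma obtain_inj_into_larger:
  fixes f :: "'b \<Rightarrow> nat" and g :: "'a \<Rightarrow> nat"
  assumes "countable S" and unbounded: "\<And>n. \<exists>d\<in>Q. n \<le> f d"
  obtains D where "inj_on D S" "D ` S \<subseteq> Q" "\<And>c. c \<in> S \<Longrightarrow> g c \<le> f (D c)"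
proof -
  have T: "infinite (f ` Q)"
    unfolding infinite_nat_iff_unbounded_le using unbounded by blast
  define t where "t = enumerate (f ` Q)"
  have t_mem: "t j \<in> f ` Q" for j unfolding t_def using T by (rule enumerate_in_set)
  have t_ge: "j \<le> t j" for j unfolding t_def using T by (rule le_enumerate)
  have "inj t" unfolding t_def using strict_mono_enumerate[OF T] by (rule strict_mono_imp_inj_on)
  define dd where "dd j = (SOME d. d \<in> Q \<and> f d = t j)" for j
  have dd: "dd j \<in> Q \<and> f (dd j) = t j" for j
  proof -
    have "\<exists>d. d \<in> Q \<and> f d = t j" using t_mem[of j] by (metis imageE)
    then show ?thesis unfolding dd_def by (rule someI_ex)
  qed
  have "inj dd"
  proof (rule injI)
    fix i j assume "dd i = dd j"
    then have "t i = t j" using dd[of i] dd[of j] by simp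
    then show "i = j" using \<open>inj t\<close> by (simp add: inj_eq)
  qed
  obtain ix :: "'a \<Rightarrow> nat" where ix: "inj_on ix S" using assms(1) by (rule countableE)
  define m where "m c = prod_encode (ix c, g c)" for c
  have "inj_on m S" using ix unfolding m_def by (auto simp: inj_on_def prod_encode_eq)
  show ?thesis
  proof
    show "inj_on (dd \<circ> m) S"
      using \<open>inj_on m S\<close> inj_on_subset[OF \<open>inj dd\<close> subset_UNIV] by (rule comp_inj_on)
    show "(dd \<circ> m) ` S \<subseteq> Q" using dd by auto
    show "g c \<le> f ((dd \<circ> m) c)" for c
    proof -
      have "g c \<le> m c" unfolding m_def by (rule le_prod_encode_2)
      also have "\<dots> \<le> t (m c)" by (rule t_ge)
      finally show ?thesis using dd by simp
    qed
  qed
qed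

lemma obtain_class_embedding:
  assumes eX: "equiv X r" and eY: "equiv Y s"
    and fin: "\<And>c. c \<in> X // r \<Longrightarrow> finite c" "\<And>c. c \<in> X // r \<Longrightarrow> finite (D c)"
    and D: "inj_on D (X // r)" "D ` (X // r) \<subseteq> Y // s"
    and le: "\<And>c. c \<in> X // r \<Longrightarrow> card c \<le> card (D c)"
  obtains G where "inj_on G X" "\<And>x. x \<in> X \<Longrightarrow> G x \<in> D (r``{x})"
proof -
  define h where "h c = (SOME h. h ` c \<subseteq> D c \<and> inj_on h c)" for c
  have h: "h c ` c \<subseteq> D c \<and> inj_on (h c) c" if "c \<in> X // r" for c
    unfolding h_def by (rule someI_ex[OF card_le_inj[OF fin(1,2)[OF that] le[OF that]]])
  define G where "G x = h (r``{x}) x" for x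
  have G: "G x \<in> D (r``{x})" if "x \<in> X" for x
    using h[OF quotientI[OF that]] equiv_class_self[OF eX that] unfolding G_def by blast
  have "inj_on G X"
  proof (rule inj_onI)
    fix x x' assume x: "x \<in> X" "x' \<in> X" and eq: "G x = G x'"
    have q: "r``{x} \<in> X // r" "r``{x'} \<in> X // r" using x by (auto intro: quotientI)
    have same: "r``{x} = r``{x'}"
    proof (rule ccontr)
      assume "r``{x} \<noteq> r``{x'}"
      then have "D (r``{x}) \<noteq> D (r``{x'})" using inj_onD[OF D(1) _ q] by blast
      moreover have "D (r``{x}) = D (r``{x'}) \<or> D (r``{x}) \<inter> D (r``{x'}) = {}"
        using D(2) q by (intro quotient_disj[OF eY]) (simp_all add: image_subset_iff)
      ultimately have "D (r``{x}) \<inter> D (r``{x'}) = {}" by blast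
      moreover have "G x \<in> D (r``{x}) \<inter> D (r``{x'})" using G[OF x(1)] G[OF x(2)] eq by simp
      ultimately show False by simp
    qed
    have xs: "x \<in> r``{x}" "x' \<in> r``{x}"
      using equiv_class_self[OF eX x(1)] equiv_class_self[OF eX x(2)] unfolding same .
    have "h (r``{x}) x = h (r``{x}) x'" using eq same unfolding G_def by simp
    then show "x = x'" by (rule inj_onD[OF conjunct2[OF h[OF q(1)]] _ xs])
  qed
  then show ?thesis using G by (rule that)
qed

lemma two_le_card:
  assumes "finite c" and "x \<in> c" and "c \<noteq> {x}"
  shows "2 \<le> card c"
proof -
  obtain y where "y \<in> c" "y \<noteq> x" using assms(2,3) by blast
  then have "card {x, y} \<le> card c" using assms(1,2) by (intro card_mono) auto
  with \<open>y \<noteq> x\<close> show ?thesis by simp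
qed

lemma condenses_C_fin:
  assumes X: "in_C_fin X r" and Y: "in_C_fin Y s"
  shows "condenses X r Y s"
proof -
  have XC: "in_C X r" and YC: "in_C Y s" using X Y unfolding in_C_fin_def by auto
  then have eX: "equiv X r" and cX: "countable X" and eY: "equiv Y s" and cY: "countable Y"
    unfolding in_C_def by auto
  have finX: "\<And>c. c \<in> X // r \<Longrightarrow> finite c" and finY: "\<And>d. d \<in> Y // s \<Longrightarrow> finite d"
    using X Y unfolding in_C_fin_def by auto
  have "\<exists>d\<in>Y // s. n \<le> card d" for n
    using YC finY unfolding in_C_def by blast
  moreover have "countable (X // r)" using cX unfolding quotient_def by simp
  ultimately obtain D where D: "inj_on D (X // r)" "D ` (X // r) \<subseteq> Y // s"
    and le: "\<And>c. c \<in> X // r \<Longrightarrow> card c \<le> card (D c)"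
    using obtain_inj_into_larger by metis
  obtain G where G: "inj_on G X" and GD: "\<And>x. x \<in> X \<Longrightarrow> G x \<in> D (r``{x})"
    using obtain_class_embedding[OF eX eY finX _ D le] finY D(2) by blast
  have D_class: "D (r``{x}) = s``{G x}" and GY: "G x \<in> Y" if "x \<in> X" for x
  proof -
    have "D (r``{x}) \<in> Y // s" using D(2) quotientI[OF that] by blast
    moreover have "G x \<in> D (r``{x})" using GD[OF that] .
    ultimately show "G x \<in> Y" "D (r``{x}) = s``{G x}"
      using in_quotient_imp_subset[OF eY] mem_quotient_iff[OF eY] by blast+
  qed
  let ?N = "X - singleton_elements X r"
  show ?thesis
  proof (rule condenses_by_extension[OF eX eY cX cY infinite_singleton_elements[OF XC]])
    show "inj_on G ?N" using G by (rule inj_on_subset) blast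
    show "G ` ?N \<subseteq> Y" using GY by blast
    show "(G x, G x') \<in> s" if "x \<in> ?N" "x' \<in> ?N" "(x, x') \<in> r" for x x'
      using GD[of x'] D_class[of x] equiv_class_eq[OF eX that(3)] that by auto
    have "singleton_elements Y s \<subseteq> Y - G ` ?N"
    proof
      fix y assume y: "y \<in> singleton_elements Y s"
      have "y \<noteq> G x" if x: "x \<in> ?N" for x
      proof
        assume "y = G x"
        have "r``{x} \<noteq> {x}" "x \<in> r``{x}" using x equiv_class_self[OF eX]
          unfolding singleton_elements_def by auto
        then have "2 \<le> card (r``{x})"
          using finX[OF quotientI] x by (intro two_le_card) auto
        also have "\<dots> \<le> card (s``{y})" using le[OF quotientI] D_class x \<open>y = G x\<close> by auto
        finally show False using y unfolding singleton_elements_def by simp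
      qed
      then show "y \<in> Y - G ` ?N" using y unfolding singleton_elements_def by auto
    qed
    then show "infinite (Y - G ` ?N)" using infinite_singleton_elements[OF YC] finite_subset by blast
  qed
qed

lemma in_C_omega_iff: "in_C X r \<Longrightarrow> in_C_omega X r \<longleftrightarrow> (\<exists>c\<in>X // r. infinite c)"
  unfolding in_C_omega_def in_C_fin_def by blast

lemma condensation_infinite_class:
  assumes F: "condensation F X r Y s" and eX: "equiv X r" and eY: "equiv Y s"
    and c: "c \<in> X // r" "infinite c"
  shows "\<exists>d\<in>Y // s. infinite d"
proof -
  obtain x where x: "x \<in> X" "c = r``{x}" using c(1) by (rule quotientE) simp
  have bij: "bij_betw F X Y" using F unfolding condensation_def by simp
  have "c \<subseteq> X" using in_quotient_imp_subset[OF eX c(1)] .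
  have "F ` c \<subseteq> s``{F x}"
  proof
    fix y assume "y \<in> F ` c"
    then obtain x' where x': "x' \<in> c" "y = F x'" by blast
    then have "(x, x') \<in> r" "x' \<in> X" using x \<open>c \<subseteq> X\<close> by auto
    then have "(F x, F x') \<in> s" using F x(1) unfolding condensation_def by blast
    then show "y \<in> s``{F x}" using x'(2) by simp
  qed
  moreover have "infinite (F ` c)"
    using c(2) inj_on_subset[OF bij_betw_imp_inj_on[OF bij] \<open>c \<subseteq> X\<close>] finite_imageD by blast
  ultimately have "infinite (s``{F x})" using finite_subset by blast
  moreover have "s``{F x} \<in> Y // s" using bij_betwE[OF bij] x(1) by (blast intro: quotientI)
  ultimately show ?thesis by blast
qed

lemma condenses_C_omega:
  assumes X: "in_C X r" and Y: "in_C_omega Y s"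
  shows "condenses X r Y s"
proof -
  have YC: "in_C Y s" using Y unfolding in_C_omega_def by simp
  have eX: "equiv X r" and cX: "countable X" and eY: "equiv Y s" and cY: "countable Y"
    using X YC unfolding in_C_def by auto
  obtain D where D: "D \<in> Y // s" "infinite D" using Y in_C_omega_iff[OF YC] by blast
  obtain y where y: "y \<in> Y" "D = s``{y}" using D(1) by (rule quotientE) simp
  have "D \<subseteq> Y" using in_quotient_imp_subset[OF eY D(1)] .
  moreover have "D \<times> D \<subseteq> s"
    using eY y(2) unfolding equiv_def sym_def trans_def by blast
  moreover have "singleton_elements Y s \<subseteq> Y - D"
  proof
    fix z assume z: "z \<in> singleton_elements Y s"
    then have "z \<in> Y" "s``{z} = {z}" unfolding singleton_elements_def by auto
    moreover have "z \<in> D \<Longrightarrow> D = s``{z}" using mem_quotient_iff[OF eY D(1)] \<open>z \<in> Y\<close> by blast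
    ultimately show "z \<in> Y - D" using D(2) by auto
  qed
  then have "infinite (Y - D)" using infinite_singleton_elements[OF YC] finite_subset by blast
  ultimately show ?thesis
    using condenses_into_clique[OF eX cX infinite_singleton_elements[OF X] eY cY] D(2) by blast
qed

lemma condenses_iff:
  assumes X: "in_C X r" and Y: "in_C Y s"
  shows "condenses X r Y s \<longleftrightarrow> in_C_fin X r \<or> in_C_omega Y s"
proof
  assume c: "condenses X r Y s"
  have "in_C_omega Y s" if fin: "\<not> in_C_fin X r"
  proof -
    obtain c where "c \<in> X // r" "infinite c" using X fin unfolding in_C_fin_def by blast
    moreover obtain F where "condensation F X r Y s" using c unfolding condenses_def by blast
    ultimately show "in_C_omega Y s"
      using condensation_infinite_class X Y in_C_omega_iff[OF Y] unfolding in_C_def by blast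
  qed
  then show "in_C_fin X r \<or> in_C_omega Y s" by blast
next
  assume "in_C_fin X r \<or> in_C_omega Y s"
  then show "condenses X r Y s"
    using condenses_C_fin condenses_C_omega[OF X] Y unfolding in_C_omega_def by blast
qed

lemma pmodels_C_omega_imp_C_fin:
  assumes X: "in_C_fin X r" and Y: "in_C_omega Y s"
    and p: "psentence p" and "pmodels Y s p"
  shows "pmodels X r p"
proof -
  have XC: "in_C X r" and YC: "in_C Y s" using X Y unfolding in_C_fin_def in_C_omega_def by auto
  then have eX: "equiv X r" and cX: "countable X" and iX: "infinite X"
    and eY: "equiv Y s" and cY: "countable Y" unfolding in_C_def by auto
  let ?Z = "X <+> (UNIV :: nat set)" and ?rZ = "add_infinite_class r"
  have eZ: "equiv ?Z ?rZ" by (rule equiv_add_infinite_class[OF eX])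
  have "condenses Y s ?Z ?rZ"
  proof (rule condenses_into_clique[OF eY cY infinite_singleton_elements[OF YC] eZ])
    show "countable ?Z" using cX by simp
    show "range Inr \<subseteq> ?Z" "infinite (range (Inr :: nat \<Rightarrow> 'a + nat))" "range Inr \<times> range Inr \<subseteq> ?rZ"
      using infinite_range_Inr by (auto simp: add_infinite_class_def)
    have "?Z - range Inr = Inl ` X" by auto
    then show "infinite (?Z - range Inr)" using iX by (simp add: finite_image_iff)
  qed
  then have "pmodels ?Z ?rZ p" using assms(4) by (rule pmodels_condenses)
  moreover have "P_equiv ?Z ?rZ X r"
    using eZ eX iX ef_invariant_add_infinite_class[OF X]
    by (intro P_equiv_if_ef_invariant) auto
  ultimately show ?thesis using p unfolding P_equiv_def by blast
qed

theorem claim6p1: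
  fixes X :: "'a set" and r :: "('a \<times> 'a) set"
    and Y :: "'b set" and s :: "('b \<times> 'b) set"
  assumes "in_C X r" and "in_C Y s"
  shows "P_equiv X r Y s
    \<and> (condenses X r Y s \<longleftrightarrow> in_C_fin X r \<or> in_C_omega Y s)
    \<and> (bi_condensable X r Y s \<longleftrightarrow>
          (in_C_fin X r \<and> in_C_fin Y s) \<or> (in_C_omega X r \<and> in_C_omega Y s))"
proof -
  have omega: "in_C_omega X r \<longleftrightarrow> \<not> in_C_fin X r" "in_C_omega Y s \<longleftrightarrow> \<not> in_C_fin Y s"
    using assms unfolding in_C_omega_def by simp_all
  have XY: "condenses X r Y s \<longleftrightarrow> in_C_fin X r \<or> in_C_omega Y s"
    and YX: "condenses Y s X r \<longleftrightarrow> in_C_fin Y s \<or> in_C_omega X r"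
    using condenses_iff assms by blast+
  have "pmodels X r p \<longleftrightarrow> pmodels Y s p" if "psentence p" for p
    using pmodels_condenses[of X r Y s p] pmodels_condenses[of Y s X r p] XY YX omega
      pmodels_C_omega_imp_C_fin[of X r Y s p] pmodels_C_omega_imp_C_fin[of Y s X r p] that by blast
  then have "P_equiv X r Y s" unfolding P_equiv_def by blast
  with XY YX omega show ?thesis unfolding bi_condensable_def by blast
qed

end
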